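(* Let $N\ge2$ and $1\le k\le N$. Then, as polynomials in $\xi_1,\dots,\xi_N$, \[ \sum_{\sigma\in S_N}\operatorname{sgn}(\sigma)\prod_{j=1}^k(1-\xi_{\sigma(j)})^{j-1}\prod_{j=k+1}^N(1-\xi_{\sigma(j)})^{j-2}\;\xi_{\sigma(1)}^{N-1}\xi_{\sigma(2)}^{N-2}\cdots\xi_{\sigma(N-1)}^{1}=(-1)^{N(N-1)/2}\prod_{1\le i<j\le N}(\xi_j-\xi_i). \] *)

theory Defs
  imports "HOL-Combinatorics.Permutations"
begin

end

theory Submission
  imports Defs "Jordan_Normal_Form.Determinant"
begin

text \<open>
  With \<open>h j y = (1 - y) ^ e j * y ^ (N - j)\<close>, where \<open>e j \<le> j - 1\<close>, the sum is the
  Leibniz expansion of \<open>det (h j (\<xi> i))\<close>. Each \<open>h j\<close> is \<open>y ^ (N - j)\<close> times a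
  polynomial of degree below \<open>j\<close> with constant term 1, so the matrix expressing the
  \<open>h j\<close> in the monomials \<open>y ^ (N - 1), \<dots>, y, 1\<close> is unitriangular and the determinant
  is the Vandermonde determinant \<open>\<Prod>i<j. \<xi> i - \<xi> j\<close>. Reversing its
  \<open>N (N - 1) / 2\<close> factors produces the sign.
\<close>

lemma sum_permutes_atLeastAtMost_eq_det:
  fixes N :: nat and G :: "nat \<Rightarrow> nat \<Rightarrow> 'a::comm_ring_1"
  shows "(\<Sum>\<sigma> | \<sigma> permutes {1..N}. of_int (sign \<sigma>) * (\<Prod>j\<in>{1..N}. G j (\<sigma> j)))
       = det (mat N N (\<lambda>(i,j). G (j+1) (i+1)))"
proof -
  let ?down = "map_permutation {1..N} (\<lambda>x. x - 1)"
  let ?up = "map_permutation {0..<N} Suc"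
  have pred_bij: "bij_betw (\<lambda>x. x - 1) {1..N} {0..<N}"
    by (rule bij_betw_byWitness[of _ Suc]) auto
  have Suc_bij: "bij_betw Suc {0..<N} {1..N}"
    by (rule bij_betw_byWitness[of _ "\<lambda>x. x - 1"]) auto
  then have inj_Suc: "inj_on Suc {0..<N}" and Suc_image: "Suc ` {0..<N} = {1..N}"
    by (simp_all add: bij_betw_def)
  have "det (mat N N (\<lambda>(i,j). G (j+1) (i+1)))
      = (\<Sum>p | p permutes {0..<N}. of_int (sign p) * (\<Prod>j<N. G (j+1) (p j + 1)))"
    by (subst det_col[of _ N]) auto
  also have "\<dots> = (\<Sum>\<sigma> | \<sigma> permutes {1..N}. of_int (sign \<sigma>) * (\<Prod>j\<in>{1..N}. G j (\<sigma> j)))"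
  proof (rule sum.reindex_bij_witness[of _ ?down ?up])
    fix p assume p: "p \<in> {p. p permutes {0..<N}}"
    show "?down (?up p) = p"
      by (rule map_permutation_compose_inv[OF Suc_bij]) (use p in auto)
    show "?up p \<in> {\<sigma>. \<sigma> permutes {1..N}}"
      using map_permutation_permutes[OF Suc_bij] p by auto
    have up_Suc: "?up p (Suc j) = Suc (p j)" if "j < N" for j
      using map_permutation_apply[OF inj_Suc, of j p] that by auto
    have "(\<Prod>j\<in>{1..N}. G j (?up p j)) = (\<Prod>j<N. G (Suc j) (?up p (Suc j)))"
      unfolding Suc_image[symmetric] by (subst prod.reindex) (auto simp: lessThan_atLeast0)
    also have "\<dots> = (\<Prod>j<N. G (j+1) (p j + 1))"
      by (rule prod.cong) (use up_Suc in auto)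
    finally show "of_int (sign (?up p)) * (\<Prod>j\<in>{1..N}. G j (?up p j))
        = of_int (sign p) * (\<Prod>j<N. G (j+1) (p j + 1))"
      using sign_map_permutation[OF inj_Suc, of p] p by simp
  next
    fix \<sigma> assume \<sigma>: "\<sigma> \<in> {\<sigma>. \<sigma> permutes {1..N}}"
    show "?up (?down \<sigma>) = \<sigma>"
      by (rule map_permutation_compose_inv[OF pred_bij]) (use \<sigma> in auto)
    show "?down \<sigma> \<in> {p. p permutes {0..<N}}"
      using map_permutation_permutes[OF pred_bij] \<sigma> by auto
  qed
  finally show ?thesis ..
qed

lemma det_mat_scale_rows:
  "det (mat n n (\<lambda>(i,j). c i * f i j)) = (\<Prod>i<n. c i) * det (mat n n (\<lambda>(i,j). f i j))"
  unfolding det_def'[OF mat_carrier] sum_distrib_left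
proof (intro sum.cong refl)
  fix p assume "p \<in> {p. p permutes {0..<n}}"
  then have "p i < n" if "i < n" for i
    using that by (auto simp: permutes_in_image)
  then show "signof p * (\<Prod>i = 0..<n. mat n n (\<lambda>(i,j). c i * f i j) $$ (i, p i))
      = (\<Prod>i<n. c i) * (signof p * (\<Prod>i = 0..<n. mat n n (\<lambda>(i,j). f i j) $$ (i, p i)))"
    by (simp add: prod.distrib lessThan_atLeast0 mult_ac)
qed

lemma mat_poly_eval_eq_vandermonde_mult_coeffs:
  fixes y :: "nat \<Rightarrow> 'a::comm_ring_1" and P :: "nat \<Rightarrow> 'a poly"
  assumes "\<And>j. j < n \<Longrightarrow> degree (P j) < n"
  shows "mat n n (\<lambda>(i,j). poly (P j) (y i))
       = mat n n (\<lambda>(i,j). y i ^ (n - 1 - j)) * mat n n (\<lambda>(t,j). coeff (P j) (n - Suc t))"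
proof (rule eq_matI, simp_all only: dim_row_mat dim_col_mat index_mult_mat)
  fix i j assume i: "i < n" and j: "j < n"
  have "poly (P j) (y i) = (\<Sum>d\<le>degree (P j). coeff (P j) d * y i ^ d)"
    by (rule poly_altdef)
  also have "\<dots> = (\<Sum>d<n. coeff (P j) d * y i ^ d)"
    using assms[OF j] by (intro sum.mono_neutral_left) (auto simp: coeff_eq_0)
  also have "\<dots> = (\<Sum>t<n. coeff (P j) (n - Suc t) * y i ^ (n - Suc t))"
    by (rule sum.nat_diff_reindex[symmetric])
  finally show "mat n n (\<lambda>(i,j). poly (P j) (y i)) $$ (i,j)
      = row (mat n n (\<lambda>(i,j). y i ^ (n - 1 - j))) i \<bullet> col (mat n n (\<lambda>(t,j). coeff (P j) (n - Suc t))) j"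
    using i j by (auto simp: scalar_prod_def lessThan_atLeast0 mult.commute intro!: sum.cong)
qed

lemma det_vandermonde:
  fixes x :: "nat \<Rightarrow> 'a::comm_ring_1"
  shows "det (mat n n (\<lambda>(i,j). x i ^ (n - 1 - j))) = (\<Prod>i<n. \<Prod>j\<in>{i+1..<n}. x i - x j)"
proof (induction n)
  case 0
  show ?case by simp
next
  case (Suc n)
  \<comment> \<open>Column \<open>j\<close> of \<open>A\<close> is column \<open>j\<close> minus \<open>x n\<close> times column \<open>j + 1\<close>; its last row is \<open>0, \<dots>, 0, 1\<close>.\<close>
  define Q where "Q j = (if j < n then monom 1 (n - 1 - j) * [:- x n, 1:] else 1)" for j
  define A where "A = mat (Suc n) (Suc n) (\<lambda>(i,j). poly (Q j) (x i))"
  define C where "C = mat (Suc n) (Suc n) (\<lambda>(t,j). coeff (Q j) (Suc n - Suc t))"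
  have "degree (Q j) < Suc n" for j
  proof (cases "j < n")
    case True
    then have "degree (Q j) \<le> degree (monom (1::'a) (n - 1 - j)) + degree [:- x n, 1:]"
      by (simp only: Q_def if_True degree_mult_le)
    also have "\<dots> \<le> (n - 1 - j) + 1"
      by (intro add_mono degree_monom_le) simp
    finally show ?thesis using True by simp
  qed (simp add: Q_def)
  then have "A = mat (Suc n) (Suc n) (\<lambda>(i,j). x i ^ (Suc n - 1 - j)) * C"
    unfolding A_def C_def by (rule mat_poly_eval_eq_vandermonde_mult_coeffs)
  moreover have "det C = 1"
    by (subst det_lower_triangular[of "Suc n"])
      (auto simp: C_def Q_def coeff_pCons coeff_monom prod_list_diag_prod Suc_diff_Suc[symmetric]
        intro!: prod.neutral split: nat.split)
  ultimately have "det (mat (Suc n) (Suc n) (\<lambda>(i,j). x i ^ (Suc n - 1 - j))) = det A"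
    by (simp add: det_mult[of _ "Suc n"] C_def)
  also have "det A = (\<Sum>j<Suc n. A $$ (n,j) * cofactor A n j)"
    by (rule laplace_expansion_row) (auto simp: A_def)
  also have "\<dots> = cofactor A n n"
    by (subst sum.remove[of _ n]) (auto simp: A_def Q_def poly_monom intro!: sum.neutral)
  also have "\<dots> = det (mat n n (\<lambda>(i,j). (x i - x n) * x i ^ (n - 1 - j)))"
    unfolding cofactor_def
    by (auto simp: A_def Q_def poly_monom mat_delete_def algebra_simps intro!: arg_cong[of _ _ det])
  also have "\<dots> = (\<Prod>i<n. x i - x n) * (\<Prod>i<n. \<Prod>j\<in>{i+1..<n}. x i - x j)"
    using det_mat_scale_rows[of n "\<lambda>i. x i - x n" "\<lambda>i j. x i ^ (n - 1 - j)"] Suc.IH by simp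
  also have "\<dots> = (\<Prod>i<Suc n. \<Prod>j\<in>{i+1..<Suc n}. x i - x j)"
    by (simp add: prod.distrib mult.commute)
  finally show ?case .
qed

lemma det_poly_mult_pow_eq_vandermonde:
  fixes y :: "nat \<Rightarrow> 'a::comm_ring_1" and g :: "nat \<Rightarrow> 'a poly"
  assumes deg: "\<And>j. j < n \<Longrightarrow> degree (g j) \<le> j"
    and const: "\<And>j. j < n \<Longrightarrow> coeff (g j) 0 = 1"
  shows "det (mat n n (\<lambda>(i,j). poly (g j) (y i) * y i ^ (n - 1 - j)))
       = (\<Prod>i<n. \<Prod>j\<in>{i+1..<n}. y i - y j)"
proof -
  define P where "P j = monom 1 (n - 1 - j) * g j" for j
  define C where "C = mat n n (\<lambda>(t,j). coeff (P j) (n - Suc t))"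
  have "degree (P j) < n" if "j < n" for j
  proof -
    have "degree (P j) \<le> (n - 1 - j) + degree (g j)"
      unfolding P_def by (rule order.trans[OF degree_mult_le]) (simp add: degree_monom_le)
    then show ?thesis using deg[OF that] that by linarith
  qed
  then have "mat n n (\<lambda>(i,j). poly (P j) (y i)) = mat n n (\<lambda>(i,j). y i ^ (n - 1 - j)) * C"
    unfolding C_def by (rule mat_poly_eval_eq_vandermonde_mult_coeffs)
  moreover have "det C = 1"
    by (subst det_upper_triangular[of _ n])
      (auto simp: C_def P_def coeff_monom_mult const upper_triangular_def prod_list_diag_prod)
  ultimately have "det (mat n n (\<lambda>(i,j). poly (P j) (y i)))
      = det (mat n n (\<lambda>(i,j). y i ^ (n - 1 - j)))"
    by (simp add: det_mult[of _ n] C_def)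
  also have "mat n n (\<lambda>(i,j). poly (P j) (y i))
      = mat n n (\<lambda>(i,j). poly (g j) (y i) * y i ^ (n - 1 - j))"
    by (auto simp: P_def poly_monom mult.commute)
  finally show ?thesis
    using det_vandermonde[of n y] by simp
qed

lemma det_one_minus_pow_mult_pow_eq_vandermonde:
  fixes y :: "nat \<Rightarrow> 'a::comm_ring_1"
  assumes "\<And>j. j < n \<Longrightarrow> e j \<le> j"
  shows "det (mat n n (\<lambda>(i,j). (1 - y i) ^ e j * y i ^ (n - 1 - j)))
       = (\<Prod>i<n. \<Prod>j\<in>{i+1..<n}. y i - y j)"
proof -
  have "degree ([:1, -1:] ^ e j :: 'a poly) \<le> j" if "j < n" for j
    using degree_power_le[of "[:1, -1:] :: 'a poly" "e j"] assms[OF that] by simp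
  then show ?thesis
    using det_poly_mult_pow_eq_vandermonde[of n "\<lambda>j. [:1, -1:] ^ e j" y]
    by (simp add: coeff_0_power)
qed

lemma prod_pairs_swap:
  fixes y :: "nat \<Rightarrow> 'a::comm_ring_1"
  shows "(\<Prod>i<n. \<Prod>j\<in>{i+1..<n}. y j - y i)
       = (-1) ^ (n * (n - 1) div 2) * (\<Prod>i<n. \<Prod>j\<in>{i+1..<n}. y i - y j)"
proof -
  have "(\<Prod>j\<in>{i+1..<n}. y j - y i) = (-1) ^ (n - Suc i) * (\<Prod>j\<in>{i+1..<n}. y i - y j)" for i
  proof -
    have "(\<Prod>j\<in>{i+1..<n}. y j - y i) = (\<Prod>j\<in>{i+1..<n}. -1 * (y i - y j))"
      by simp
    then show ?thesis
      by (simp only: prod.distrib prod_constant card_atLeastLessThan) simp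
  qed
  moreover have "(\<Sum>i<n. n - Suc i) = n * (n - 1) div 2"
    using sum.nat_diff_reindex[of "\<lambda>i. i" n] Sum_Ico_nat[of 0 n] by (simp add: lessThan_atLeast0)
  ultimately show ?thesis
    by (simp add: prod.distrib flip: power_sum)
qed

lemma prod_atLeastAtMost_split_if:
  fixes k N :: nat
  assumes "k \<le> N"
  shows "(\<Prod>j\<in>{1..k}. f j) * (\<Prod>j\<in>{k+1..N}. g j)
       = (\<Prod>j\<in>{1..N}. if j \<le> k then f j else g j)"
proof -
  have "{1..N} \<inter> {j. j \<le> k} = {1..k}" and "{1..N} \<inter> - {j. j \<le> k} = {k+1..N}"
    using assms by auto
  then show ?thesis
    by (simp only: prod.If_cases[OF finite_atLeastAtMost])
qed

lemma prod_atLeastAtMost_Suc_shift: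
  "(\<Prod>j\<in>{Suc m..n}. g j) = (\<Prod>j\<in>{m..<n}. g (Suc j))"
  by (subst atLeastLessThanSuc_atLeastAtMost[symmetric]) (rule prod.shift_bounds_Suc_ivl)

theorem mainTheorem8:
  fixes N k :: nat and \<xi> :: "nat \<Rightarrow> 'a::comm_ring_1"
  assumes "N \<ge> 2" and "1 \<le> k" and "k \<le> N"
  shows "(\<Sum>\<sigma> | \<sigma> permutes {1..N}.
            of_int (sign \<sigma>)
            * (\<Prod>j\<in>{1..k}. (1 - \<xi> (\<sigma> j)) ^ (j - 1))
            * (\<Prod>j\<in>{k+1..N}. (1 - \<xi> (\<sigma> j)) ^ (j - 2))
            * (\<Prod>j\<in>{1..N}. \<xi> (\<sigma> j) ^ (N - j)))
         = (-1) ^ (N * (N - 1) div 2) * (\<Prod>i\<in>{1..N}. \<Prod>j\<in>{i+1..N}. (\<xi> j - \<xi> i))"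
    (is "?lhs = ?rhs")
proof -
  define e where "e j = (if j \<le> k then j - 1 else j - 2)" for j
  have "(\<Prod>j\<in>{1..k}. (1 - \<xi> (\<sigma> j)) ^ (j - 1)) * (\<Prod>j\<in>{k+1..N}. (1 - \<xi> (\<sigma> j)) ^ (j - 2))
      = (\<Prod>j\<in>{1..N}. (1 - \<xi> (\<sigma> j)) ^ e j)" for \<sigma>
    unfolding prod_atLeastAtMost_split_if[OF \<open>k \<le> N\<close>] e_def by (intro prod.cong) auto
  then have "?lhs = det (mat N N (\<lambda>(i,j). (1 - \<xi> (Suc i)) ^ e (Suc j) * \<xi> (Suc i) ^ (N - 1 - j)))"
    using sum_permutes_atLeastAtMost_eq_det
      [where N = N and G = "\<lambda>j c. (1 - \<xi> c) ^ e j * \<xi> c ^ (N - j)"]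
    by (simp add: prod.distrib mult.assoc)
  also have "\<dots> = (\<Prod>i<N. \<Prod>j\<in>{i+1..<N}. \<xi> (Suc i) - \<xi> (Suc j))"
    by (rule det_one_minus_pow_mult_pow_eq_vandermonde) (simp add: e_def)
  also have "\<dots> = ?rhs"
    using prod_pairs_swap[where n = N and y = "\<lambda>i. \<xi> (Suc i)"]
    by (simp add: prod_atLeastAtMost_Suc_shift lessThan_atLeast0 flip: power_add)
  finally show ?thesis .
qed

end
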